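(* Let $\mathcal{X}$ be a finite set and let $e:\mathcal{X}\times\mathcal{X}\to\mathbb{R}$ be a semimetric, i.e. $e(x,y)=e(y,x)$ for all $x,y\in\mathcal{X}$, and $e(x,y)\ge 0$ for all $x,y\in\mathcal{X}$ with equality if and only if $x=y$. Then there is a metric $d$ on $\mathcal{X}$ such that for every $x,y,z\in\mathcal{X}$, $d(x,y)<d(x,z)$ if and only if $e(x,y)<e(x,z)$. *)

theory Defs
  imports Main "HOL.Real"
begin

definition semimetric_on :: "'a set \<Rightarrow> ('a \<Rightarrow> 'a \<Rightarrow> real) \<Rightarrow> bool" where
  "semimetric_on X e \<longleftrightarrow>
     (\<forall>x\<in>X. \<forall>y\<in>X. e x y = e y x) \<and>
     (\<forall>x\<in>X. \<forall>y\<in>X. e x y \<ge> 0) \<and>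
     (\<forall>x\<in>X. \<forall>y\<in>X. e x y = 0 \<longleftrightarrow> x = y)"

definition metric_on :: "'a set \<Rightarrow> ('a \<Rightarrow> 'a \<Rightarrow> real) \<Rightarrow> bool" where
  "metric_on X d \<longleftrightarrow> semimetric_on X d \<and>
     (\<forall>x\<in>X. \<forall>y\<in>X. \<forall>z\<in>X. d x z \<le> d x y + d y z)"

end

theory Submission
  imports Defs
begin

text \<open>Pushing all off-diagonal distances up by a constant at least as large as every distance
  makes the triangle inequality automatic, since any two nonzero distances then sum to at least
  twice the constant; the shift is strictly monotone on distances from a fixed point, so it
  preserves their order. On a finite set such a constant is the largest distance.\<close>

definition shifted_semimetric :: "real \<Rightarrow> ('a \<Rightarrow> 'a \<Rightarrow> real) \<Rightarrow> 'a \<Rightarrow> 'a \<Rightarrow> real" where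
  "shifted_semimetric c e x y = (if x = y then 0 else c + e x y)"

lemma finite_imp_bounded_on_pairs:
  fixes e :: "'a \<Rightarrow> 'a \<Rightarrow> real"
  assumes "finite X"
  shows "\<exists>c. \<forall>x\<in>X. \<forall>y\<in>X. e x y \<le> c"
proof -
  have "bdd_above (case_prod e ` (X \<times> X))"
    using assms by (intro bdd_above_finite) auto
  then show ?thesis
    unfolding bdd_above_def by auto
qed

context
  fixes X :: "'a set" and e :: "'a \<Rightarrow> 'a \<Rightarrow> real" and c :: real
  assumes semimetric: "semimetric_on X e"
    and bound: "\<forall>x\<in>X. \<forall>y\<in>X. e x y \<le> c"
begin

private lemma semimetric_facts:
  assumes "x \<in> X" "y \<in> X"
  shows "e x y = e y x" "e x y \<ge> 0" "e x y = 0 \<longleftrightarrow> x = y" "e x y \<le> c" "c \<ge> 0"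
  using assms semimetric bound unfolding semimetric_on_def by (metis order_trans)+

lemma metric_on_shifted_semimetric: "metric_on X (shifted_semimetric c e)"
  unfolding metric_on_def semimetric_on_def shifted_semimetric_def
proof (intro conjI ballI)
  fix x y assume "x \<in> X" "y \<in> X"
  note facts = semimetric_facts[OF this]
  show "(if x = y then 0 else c + e x y) = (if y = x then 0 else c + e y x)"
    using facts by auto
  show "0 \<le> (if x = y then 0 else c + e x y)"
    using facts by auto
  show "((if x = y then 0 else c + e x y) = 0) = (x = y)"
    using facts by auto
next
  fix x y z assume "x \<in> X" "y \<in> X" "z \<in> X"
  then show "(if x = z then 0 else c + e x z)
      \<le> (if x = y then 0 else c + e x y) + (if y = z then 0 else c + e y z)"
    using semimetric_facts[of x y] semimetric_facts[of y z] semimetric_facts[of x z] by auto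
qed

lemma shifted_semimetric_less_iff:
  assumes "x \<in> X" "y \<in> X" "z \<in> X"
  shows "shifted_semimetric c e x y < shifted_semimetric c e x z \<longleftrightarrow> e x y < e x z"
  using semimetric_facts[OF assms(1,2)] semimetric_facts[OF assms(1,3)]
  unfolding shifted_semimetric_def by auto

end

theorem mainTheorem4:
  fixes X :: "'a set" and e :: "'a \<Rightarrow> 'a \<Rightarrow> real"
  assumes "finite X" and "semimetric_on X e"
  shows "\<exists>d :: 'a \<Rightarrow> 'a \<Rightarrow> real. metric_on X d \<and>
           (\<forall>x\<in>X. \<forall>y\<in>X. \<forall>z\<in>X. d x y < d x z \<longleftrightarrow> e x y < e x z)"
proof -
  obtain c where bound: "\<forall>x\<in>X. \<forall>y\<in>X. e x y \<le> c"
    using finite_imp_bounded_on_pairs[OF assms(1)] by blast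
  show ?thesis
    using metric_on_shifted_semimetric[OF assms(2) bound]
      shifted_semimetric_less_iff[OF assms(2) bound] by blast
qed

end
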